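(* Let $k, \ell \in \mathbb{N}$ and let $T$ be a tournament on vertex set $V=Q_1\,\dot{\cup}\,\dots\, \dot{\cup}\, Q_\ell$ (a disjoint union), with $|Q_j|\geq k+1$ for all $j\in \{1,\dots ,\ell\}$. Suppose that for each $j\in \{1,\dots ,\ell\}$, $T[Q_j]$ is a backwards-transitive path. Then there exist sets $U, W, U', W'$ such that: (a) $U\subseteq U'\subseteq V(T)$ and $W\subseteq W'\subseteq V(T)$; (b) $|U|,|W|\leq 2k(k+1)$ and $|U'|=|W'|= \ell(k+1)$; (c) for any set $S\subseteq V(T)$ of size at most $k-1$ and every vertex $v\in V(T)\setminus S$, there exists a directed path (possibly of length $0$) in $T[(U'\cup \{v\})\setminus S]$ from $v$ to a vertex in $U$, and a directed path (possibly of length $0$) in $T[(W'\cup \{v\})\setminus S]$ from a vertex in $W$ to $v$.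
   Context: A tournament is an orientation of a complete graph; $T[U]$ denotes the subtournament induced by $U$. A non-empty tournament $Q$ is a backwards-transitive path if its vertices can be enumerated $q_1,\dots, q_{|Q|}$ such that there is an edge from $q_i$ to $q_j$ if and only if either $j=i+1$ or $i\geq j+2$. *)

theory Defs
  imports Main
begin

definition tournament :: "'a set \<Rightarrow> ('a \<Rightarrow> 'a \<Rightarrow> bool) \<Rightarrow> bool" where
  "tournament V E \<longleftrightarrow>
     (\<forall>x y. E x y \<longrightarrow> x \<in> V \<and> y \<in> V) \<and>
     (\<forall>x\<in>V. \<not> E x x) \<and>
     (\<forall>x\<in>V. \<forall>y\<in>V. x \<noteq> y \<longrightarrow> (E x y \<longleftrightarrow> \<not> E y x))"

text \<open>The induced subtournament on Q is a backwards-transitive path: Q is non-empty and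
  its vertices can be enumerated q_1,...,q_|Q| (here 0-indexed) with an edge q_i -> q_j
  iff j = i+1 or i >= j+2.\<close>
definition bt_path :: "('a \<Rightarrow> 'a \<Rightarrow> bool) \<Rightarrow> 'a set \<Rightarrow> bool" where
  "bt_path E Q \<longleftrightarrow> Q \<noteq> {} \<and>
     (\<exists>qs. distinct qs \<and> set qs = Q \<and>
        (\<forall>i < length qs. \<forall>j < length qs.
           E (qs ! i) (qs ! j) \<longleftrightarrow> (j = i + 1 \<or> i \<ge> j + 2)))"

text \<open>A directed path (possibly of length 0, i.e. a single vertex) in the induced
  subtournament on X, given as its list of vertices.\<close>
definition dpath :: "('a \<Rightarrow> 'a \<Rightarrow> bool) \<Rightarrow> 'a set \<Rightarrow> 'a list \<Rightarrow> bool" where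
  "dpath E X xs \<longleftrightarrow> xs \<noteq> [] \<and> distinct xs \<and> set xs \<subseteq> X \<and>
     (\<forall>i. i + 1 < length xs \<longrightarrow> E (xs ! i) (xs ! (i + 1)))"

end

theory Submission
  imports Defs
begin

text \<open>Let \<open>U'\<close> consist of the first \<open>k + 1\<close> vertices of each backwards-transitive path. Every
  later vertex of a path has edges to all of the first \<open>k\<close> ones, so from any vertex outside \<open>U'\<close>
  one step leads into \<open>U' - S\<close>. Let \<open>U\<close> consist of the \<open>4k\<close> vertices of largest in-degree in
  \<open>T[U']\<close>. If the set \<open>C\<close> of vertices reachable from some vertex in \<open>T[U' - S]\<close> avoided \<open>U\<close>,
  all other vertices of \<open>U' - S\<close> would dominate \<open>C\<close>; comparing the in-degrees of a vertex of
  \<open>C\<close> of at least average in-degree within \<open>C\<close>, of a vertex of \<open>U - S\<close>, and the average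
  in-degree over \<open>U\<close> then yields \<open>card U < 4 * card S < 4k\<close>. The sets \<open>W, W'\<close> come from the
  same construction in the reversed tournament, whose backwards-transitive paths are the reversed
  paths.\<close>

section \<open>Directed paths\<close>

abbreviation induced :: "('a \<Rightarrow> 'a \<Rightarrow> bool) \<Rightarrow> 'a set \<Rightarrow> 'a \<Rightarrow> 'a \<Rightarrow> bool" where
  "induced E X \<equiv> \<lambda>x y. E x y \<and> x \<in> X \<and> y \<in> X"

lemma dpath_singleton: "x \<in> X \<Longrightarrow> dpath E X [x]"
  unfolding dpath_def by auto

lemma dpath_mono: "dpath E X xs \<Longrightarrow> X \<subseteq> Y \<Longrightarrow> dpath E Y xs"
  unfolding dpath_def by auto

lemma dpath_Cons:
  assumes "dpath E X xs" "x \<in> X" "x \<notin> set xs" "E x (hd xs)"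
  shows "dpath E X (x # xs)"
  unfolding dpath_def
proof (intro conjI allI impI)
  show "x # xs \<noteq> []" "distinct (x # xs)" "set (x # xs) \<subseteq> X"
    using assms unfolding dpath_def by auto
  fix i assume i: "i + 1 < length (x # xs)"
  show "E ((x # xs) ! i) ((x # xs) ! (i + 1))"
  proof (cases i)
    case 0
    then show ?thesis using assms unfolding dpath_def by (auto simp: hd_conv_nth)
  next
    case (Suc j)
    then show ?thesis using assms i unfolding dpath_def by auto
  qed
qed

lemma dpath_drop: "dpath E X xs \<Longrightarrow> i < length xs \<Longrightarrow> dpath E X (drop i xs)"
  unfolding dpath_def by (auto dest: in_set_dropD simp: add.assoc)

lemma dpath_rev_converse:
  assumes "dpath (\<lambda>x y. E y x) X xs"
  shows "dpath E X (rev xs)"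
  unfolding dpath_def
proof (intro conjI allI impI)
  show "rev xs \<noteq> []" "distinct (rev xs)" "set (rev xs) \<subseteq> X"
    using assms unfolding dpath_def by auto
  fix i assume i: "i + 1 < length (rev xs)"
  define j where "j = length xs - 2 - i"
  have "j + 1 < length xs" using i by (simp add: j_def)
  then have "E (xs ! (j + 1)) (xs ! j)" using assms unfolding dpath_def by blast
  moreover have "length xs - Suc i = j + 1" "length xs - Suc (Suc i) = j"
    using i by (auto simp: j_def)
  ultimately show "E (rev xs ! i) (rev xs ! (i + 1))"
    using i by (simp add: rev_nth)
qed

lemma dpath_of_rtranclp:
  assumes "(induced E X)\<^sup>*\<^sup>* a b" "a \<in> X"
  shows "\<exists>xs. dpath E X xs \<and> hd xs = a \<and> last xs = b"
  using assms
proof (induction rule: converse_rtranclp_induct)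
  case base
  then show ?case using dpath_singleton by fastforce
next
  case (step a a')
  then obtain p where p: "dpath E X p" "hd p = a'" "last p = b" by auto
  have "p \<noteq> []" using p unfolding dpath_def by auto
  show ?case
  proof (cases "a \<in> set p")
    case True
    then obtain i where i: "i < length p" "p ! i = a" by (auto simp: in_set_conv_nth)
    then show ?thesis using dpath_drop[OF p(1) i(1)] p
      by (intro exI[of _ "drop i p"]) (auto simp: hd_drop_conv_nth)
  next
    case False
    then show ?thesis using dpath_Cons[OF p(1), of a] \<open>p \<noteq> []\<close> step p
      by (intro exI[of _ "a # p"]) auto
  qed
qed

section \<open>In-degrees in tournaments\<close>

definition indegree :: "('a \<Rightarrow> 'a \<Rightarrow> bool) \<Rightarrow> 'a set \<Rightarrow> 'a \<Rightarrow> nat" where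
  "indegree E A x = card {y \<in> A. E y x}"

lemma tournament_converse: "tournament V E \<Longrightarrow> tournament V (\<lambda>x y. E y x)"
  unfolding tournament_def by metis

lemma tournament_sum_indegree:
  assumes "tournament V E" "A \<subseteq> V" "finite A"
  shows "2 * (\<Sum>x\<in>A. indegree E A x) = card A * (card A - 1)"
proof -
  let ?In = "Sigma A (\<lambda>x. {y\<in>A. E y x})"
  let ?Out = "Sigma A (\<lambda>x. {y\<in>A. E x y})"
  have "\<And>x y. x \<in> A \<Longrightarrow> y \<in> A \<Longrightarrow> x \<noteq> y \<Longrightarrow> E x y \<longleftrightarrow> \<not> E y x" "\<And>x. x \<in> A \<Longrightarrow> \<not> E x x"
    using assms unfolding tournament_def by blast+
  then have "?In \<union> ?Out = Sigma A (\<lambda>x. A - {x})" "?In \<inter> ?Out = {}" by blast+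
  moreover have "card (?In \<union> ?Out) = card ?In + card ?Out"
    using \<open>?In \<inter> ?Out = {}\<close> assms(3) by (intro card_Un_disjoint) auto
  moreover have "card (Sigma A (\<lambda>x. A - {x})) = card A * (card A - 1)"
    using assms(3) by simp
  ultimately have "card ?In + card ?Out = card A * (card A - 1)" by simp
  moreover have "card ?Out = card ?In"
  proof -
    have "?Out = prod.swap ` ?In" by auto
    then show ?thesis by (simp add: card_image)
  qed
  moreover have "card ?In = (\<Sum>x\<in>A. indegree E A x)"
    using assms(3) by (simp add: indegree_def)
  ultimately show ?thesis by simp
qed

lemma tournament_exists_indegree_ge_half:
  assumes "tournament V E" "C \<subseteq> V" "finite C" "C \<noteq> {}"
  shows "\<exists>x\<in>C. card C \<le> 2 * indegree E C x + 1"
proof (rule ccontr)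
  assume "\<not> ?thesis"
  then have "(\<Sum>x\<in>C. 2 * indegree E C x + 2) \<le> (\<Sum>x\<in>C. card C)"
    by (intro sum_mono) (auto simp: not_le)
  moreover have "(\<Sum>x\<in>C. 2 * indegree E C x + 2) = 2 * (\<Sum>x\<in>C. indegree E C x) + 2 * card C"
    unfolding sum.distrib sum_distrib_left[symmetric] by simp
  ultimately have "card C * (card C - 1) + 2 * card C \<le> card C * card C"
    using tournament_sum_indegree[OF assms(1-3)] by simp
  moreover have "card C > 0" using assms(3,4) by (simp add: card_gt_0_iff)
  ultimately show False by (cases "card C") (auto simp: algebra_simps)
qed

text \<open>The in-degree of \<open>x\<close> is at most the average in-degree over \<open>U\<close>, which counts at most
  \<open>(card U - 1) / 2\<close> edges from inside \<open>U\<close> and \<open>card (U' - U)\<close> from outside.\<close>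
lemma indegree_outside_maximal_indegree_set:
  assumes tour: "tournament V E" and "finite U'" "U' \<subseteq> V" "U \<subseteq> U'" "U \<noteq> {}"
    and top: "\<forall>x\<in>U' - U. \<forall>u\<in>U. indegree E U' x \<le> indegree E U' u"
    and x: "x \<in> U' - U"
  shows "2 * indegree E U' x + card U + 1 \<le> 2 * card U'"
proof -
  define d where "d = card U"
  define N where "N = card U'"
  have finU: "finite U" using assms(2,4) finite_subset by blast
  have "d < N" unfolding d_def N_def using assms(2,4) x by (metis Diff_iff psubsetI psubset_card_mono)
  have split: "indegree E U' u \<le> indegree E U u + (N - d)" for u
  proof -
    have "{y\<in>U'. E y u} \<subseteq> {y\<in>U. E y u} \<union> (U' - U)" by auto
    then have "indegree E U' u \<le> card ({y\<in>U. E y u} \<union> (U' - U))"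
      unfolding indegree_def using assms(2) finU by (intro card_mono) auto
    also have "\<dots> \<le> indegree E U u + card (U' - U)" unfolding indegree_def by (rule card_Un_le)
    finally show ?thesis using assms(4) finU by (simp add: card_Diff_subset d_def N_def)
  qed
  have "d * indegree E U' x \<le> (\<Sum>u\<in>U. indegree E U' u)"
    using sum_mono[of U "\<lambda>_. indegree E U' x"] top x by (simp add: d_def)
  also have "\<dots> \<le> (\<Sum>u\<in>U. indegree E U u + (N - d))" by (intro sum_mono split)
  also have "\<dots> = (\<Sum>u\<in>U. indegree E U u) + d * (N - d)" by (simp add: sum.distrib d_def)
  finally have "d * (2 * indegree E U' x) \<le> 2 * (\<Sum>u\<in>U. indegree E U u) + d * (2 * (N - d))"
    by simp
  also have "2 * (\<Sum>u\<in>U. indegree E U u) = d * (d - 1)"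
    using tournament_sum_indegree[OF tour _ finU] assms(3,4) by (simp add: d_def)
  finally have "d * (2 * indegree E U' x) \<le> d * (d - 1) + d * (2 * (N - d))" .
  then have "d * (2 * indegree E U' x) \<le> d * (d - 1 + 2 * (N - d))"
    by (simp add: distrib_left)
  moreover have "d > 0" using assms(5) finU by (simp add: d_def card_gt_0_iff)
  ultimately have "2 * indegree E U' x \<le> d - 1 + 2 * (N - d)" by simp
  with \<open>d < N\<close> \<open>d > 0\<close> show ?thesis by (simp add: d_def N_def)
qed

lemma exists_subset_maximal_values:
  fixes f :: "'a \<Rightarrow> 'b::linorder"
  assumes "finite A" "d \<le> card A"
  shows "\<exists>U\<subseteq>A. card U = d \<and> (\<forall>x\<in>A - U. \<forall>u\<in>U. f x \<le> f u)"
  using assms(2)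
proof (induction d)
  case 0
  then show ?case by (intro exI[of _ "{}"]) auto
next
  case (Suc d)
  then obtain U where U: "U \<subseteq> A" "card U = d" "\<forall>x\<in>A - U. \<forall>u\<in>U. f x \<le> f u" by auto
  have finU: "finite U" using U(1) assms(1) finite_subset by blast
  have "\<not> A \<subseteq> U"
  proof
    assume "A \<subseteq> U"
    then have "card A \<le> d" using U(2) card_mono[OF finU] by blast
    then show False using Suc.prems by simp
  qed
  then have "f ` (A - U) \<noteq> {}" by blast
  then obtain m where m: "m \<in> A - U" "f m = Max (f ` (A - U))"
    using Max_in[of "f ` (A - U)"] assms(1) by (metis finite_Diff finite_imageI imageE)
  then have "\<forall>x\<in>A - U. f x \<le> f m" using assms(1) by simp
  then have "\<forall>x\<in>A - insert m U. \<forall>u\<in>insert m U. f x \<le> f u" using U(3) by blast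
  moreover have "insert m U \<subseteq> A" "card (insert m U) = Suc d" using m U finU by auto
  ultimately show ?case by blast
qed

text \<open>For \<open>C\<close> the set of vertices reachable from \<open>a\<close>: some \<open>x \<in> C\<close> has in-degree at least
  \<open>card U' - card S - (card C + 1) / 2\<close> and a vertex \<open>u \<in> U - S\<close> at most \<open>card U' - card C - 1\<close>;
  hence \<open>card C < 2 * card S\<close>, and the average over \<open>U\<close> gives \<open>card U < 4 * card S\<close>.\<close>
lemma reaches_maximal_indegree_set:
  assumes tour: "tournament V E" and finU': "finite U'" and U'V: "U' \<subseteq> V" and UU': "U \<subseteq> U'"
    and top: "\<forall>x\<in>U' - U. \<forall>u\<in>U. indegree E U' x \<le> indegree E U' u"
    and large: "U = U' \<or> 4 * card S < card U" and finS: "finite S"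
    and a: "a \<in> U' - S"
  shows "\<exists>b\<in>U. (induced E (U' - S))\<^sup>*\<^sup>* a b"
proof (rule ccontr)
  assume unreached: "\<not> ?thesis"
  define X where "X = U' - S"
  define C where "C = {y. (induced E X)\<^sup>*\<^sup>* a y}"
  have edge_iff: "\<And>x y. x \<in> V \<Longrightarrow> y \<in> V \<Longrightarrow> x \<noteq> y \<Longrightarrow> E x y \<longleftrightarrow> \<not> E y x"
    and no_loop: "\<And>x. x \<in> V \<Longrightarrow> \<not> E x x" using tour unfolding tournament_def by blast+
  have CX: "C \<subseteq> X"
  proof
    fix y assume "y \<in> C"
    then have "(induced E X)\<^sup>*\<^sup>* a y" by (simp add: C_def)
    then show "y \<in> X" using a by (induction rule: rtranclp_induct) (auto simp: X_def)
  qed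
  have aC: "a \<in> C" by (simp add: C_def)
  have CU: "C \<inter> U = {}" using unreached by (auto simp: C_def X_def)
  have dominated: "E y x" if "x \<in> C" "y \<in> X - C" for x y
  proof -
    have "\<not> E x y"
      using that CX by (auto simp: C_def intro: rtranclp.rtrancl_into_rtrancl)
    then show "E y x" using that edge_iff[of x y] CX U'V by (auto simp: X_def)
  qed
  have finX: "finite X" using finU' by (simp add: X_def)
  have finC: "finite C" using CX finX finite_subset by blast
  have "U \<noteq> U'" using aC CU a by blast
  with large have big: "4 * card S < card U" by blast
  then have "\<not> U \<subseteq> S" using card_mono[OF finS, of U] by linarith
  then obtain u where u: "u \<in> U" "u \<notin> S" by blast
  have uXC: "u \<in> X - C" using u UU' CU by (auto simp: X_def)
  obtain x where x: "x \<in> C" "card C \<le> 2 * indegree E C x + 1"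
    using tournament_exists_indegree_ge_half[OF tour _ finC] CX U'V aC by (auto simp: X_def)
  have x_indegree: "card (X - C) + indegree E C x \<le> indegree E U' x"
  proof -
    have "(X - C) \<union> {y\<in>C. E y x} \<subseteq> {y\<in>U'. E y x}"
      using dominated[OF x(1)] CX by (auto simp: X_def)
    then have "card ((X - C) \<union> {y\<in>C. E y x}) \<le> indegree E U' x"
      unfolding indegree_def using finU' by (intro card_mono) auto
    moreover have "card ((X - C) \<union> {y\<in>C. E y x}) = card (X - C) + indegree E C x"
      unfolding indegree_def using finX finC by (intro card_Un_disjoint) auto
    ultimately show ?thesis by simp
  qed
  have u_indegree: "indegree E U' u + card C + 1 \<le> card U'"
  proof -
    have "\<not> E y u" if "y \<in> insert u C" for y
      using that dominated[OF _ uXC] edge_iff[of u y] no_loop[of u] uXC CX U'V by (auto simp: X_def)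
    then have "{y\<in>U'. E y u} \<inter> insert u C = {}" by blast
    then have "card ({y\<in>U'. E y u} \<union> insert u C) = indegree E U' u + card (C \<union> {u})"
      unfolding indegree_def using finU' finC by (subst card_Un_disjoint) auto
    moreover have "card ({y\<in>U'. E y u} \<union> insert u C) \<le> card U'"
      using uXC CX finU' by (intro card_mono) (auto simp: X_def)
    ultimately show ?thesis using uXC finC by simp
  qed
  have "x \<in> U' - U" using x(1) CX CU by (auto simp: X_def)
  then have "indegree E U' x \<le> indegree E U' u" using top u(1) by blast
  moreover have "2 * indegree E U' x + card U + 1 \<le> 2 * card U'"
    using indegree_outside_maximal_indegree_set[OF tour finU' U'V UU' _ top \<open>x \<in> U' - U\<close>] u(1) by blast
  moreover have "card U' \<le> card X + card S"
    unfolding X_def using finS diff_card_le_card_Diff[OF finS, of U'] by linarith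
  moreover have "card (X - C) + card C = card X"
    using CX finC card_mono[OF finX CX] by (simp add: card_Diff_subset)
  ultimately show False using x(2) x_indegree u_indegree big by linarith
qed

lemma dpath_to_maximal_indegree_set:
  assumes tour: "tournament V E" and "finite U'" "U' \<subseteq> V" "U \<subseteq> U'"
    and "\<forall>x\<in>U' - U. \<forall>u\<in>U. indegree E U' x \<le> indegree E U' u"
    and "U = U' \<or> 4 * card S < card U" "finite S"
    and v: "v \<notin> S" and a: "a \<in> U' - S" "v = a \<or> v \<notin> U' \<and> E v a"
  shows "\<exists>xs. dpath E ((U' \<union> {v}) - S) xs \<and> hd xs = v \<and> last xs \<in> U"
proof -
  from reaches_maximal_indegree_set[OF assms(1-7) a(1)]
  obtain b where "b \<in> U" and "(induced E (U' - S))\<^sup>*\<^sup>* a b" ..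
  with dpath_of_rtranclp[OF _ a(1)]
  obtain p where p: "dpath E (U' - S) p" "hd p = a" "last p \<in> U" by blast
  have p': "dpath E ((U' \<union> {v}) - S) p" by (rule dpath_mono[OF p(1)]) blast
  show ?thesis
  proof (cases "v = a")
    case True
    then show ?thesis using p p' by blast
  next
    case False
    then have "v \<notin> U'" "E v (hd p)" using p(2) a(2) by auto
    moreover have "set p \<subseteq> U' - S" "p \<noteq> []" using p(1) unfolding dpath_def by auto
    ultimately have "dpath E ((U' \<union> {v}) - S) (v # p)"
      using dpath_Cons[OF p', of v] v by blast
    then show ?thesis using p \<open>p \<noteq> []\<close> by (intro exI[of _ "v # p"]) simp
  qed
qed

section \<open>Backwards-transitive paths\<close>

lemma bt_path_converse:
  assumes "bt_path E Q"
  shows "bt_path (\<lambda>x y. E y x) Q"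
proof -
  obtain qs where qs: "distinct qs" "set qs = Q"
    "\<forall>i < length qs. \<forall>j < length qs. E (qs ! i) (qs ! j) \<longleftrightarrow> (j = i + 1 \<or> i \<ge> j + 2)"
    using assms unfolding bt_path_def by blast
  have "E (rev qs ! j) (rev qs ! i) \<longleftrightarrow> (j = i + 1 \<or> i \<ge> j + 2)"
    if "i < length qs" "j < length qs" for i j
  proof -
    have "E (rev qs ! j) (rev qs ! i) \<longleftrightarrow>
        (length qs - Suc i = length qs - Suc j + 1 \<or> length qs - Suc j \<ge> length qs - Suc i + 2)"
      using qs(3) that by (simp add: rev_nth)
    also have "\<dots> \<longleftrightarrow> (j = i + 1 \<or> i \<ge> j + 2)" using that by arith
    finally show ?thesis .
  qed
  then show ?thesis
    using assms qs(1,2) unfolding bt_path_def by (intro conjI exI[of _ "rev qs"]) auto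
qed

lemma bt_path_prefix_outdegree:
  assumes "bt_path E Q" "k + 1 \<le> card Q"
  shows "\<exists>A\<subseteq>Q. card A = k + 1 \<and> (\<forall>v\<in>Q - A. k \<le> card {a\<in>A. E v a})"
proof -
  obtain qs where qs: "distinct qs" "set qs = Q"
    "\<forall>i < length qs. \<forall>j < length qs. E (qs ! i) (qs ! j) \<longleftrightarrow> (j = i + 1 \<or> i \<ge> j + 2)"
    using assms(1) unfolding bt_path_def by blast
  have len: "k + 1 \<le> length qs" using assms(2) distinct_card[OF qs(1)] qs(2) by simp
  define A where "A = set (take (k + 1) qs)"
  have "card A = k + 1" using qs(1) len by (simp add: A_def distinct_card)
  moreover have "A \<subseteq> Q" using qs(2) set_take_subset[of "k + 1" qs] by (simp add: A_def)
  moreover have "k \<le> card {a\<in>A. E v a}" if v: "v \<in> Q - A" for v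
  proof -
    obtain i where i: "i < length qs" "qs ! i = v" using v qs(2) by (auto simp: in_set_conv_nth)
    have "k + 1 \<le> i"
    proof (rule ccontr)
      assume "\<not> k + 1 \<le> i"
      then have "v \<in> A" using i by (auto simp: A_def in_set_conv_nth)
      then show False using v by blast
    qed
    have "qs ! m \<in> A" if "m < k" for m
      using that len nth_mem[of m "take (k + 1) qs"] by (simp add: A_def)
    then have "(!) qs ` {..<k} \<subseteq> {a\<in>A. E v a}"
      using i \<open>k + 1 \<le> i\<close> qs(3) by auto
    moreover have "card ((!) qs ` {..<k}) = k"
      using qs(1) len by (subst card_image) (auto simp: inj_on_def nth_eq_iff_index_eq)
    moreover have "finite {a\<in>A. E v a}" by (simp add: A_def)
    ultimately show ?thesis by (metis card_mono)
  qed
  ultimately show ?thesis by blast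
qed

lemma exists_one_step_absorbing_set:
  fixes k l :: nat and V :: "'a set" and E :: "'a \<Rightarrow> 'a \<Rightarrow> bool" and Q :: "nat \<Rightarrow> 'a set"
  assumes cover: "V = (\<Union>j\<in>{1..l}. Q j)"
    and disj: "\<forall>i\<in>{1..l}. \<forall>j\<in>{1..l}. i \<noteq> j \<longrightarrow> Q i \<inter> Q j = {}"
    and size: "\<forall>j\<in>{1..l}. card (Q j) \<ge> k + 1"
    and btp: "\<forall>j\<in>{1..l}. bt_path E (Q j)"
  obtains U' where "U' \<subseteq> V" "card U' = l * (k + 1)"
    "\<And>S v. finite S \<Longrightarrow> card S < k \<Longrightarrow> v \<in> V - S \<Longrightarrow> \<exists>a\<in>U' - S. v = a \<or> v \<notin> U' \<and> E v a"
proof -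
  have "\<forall>j\<in>{1..l}. \<exists>A\<subseteq>Q j. card A = k + 1 \<and> (\<forall>v\<in>Q j - A. k \<le> card {a\<in>A. E v a})"
    using bt_path_prefix_outdegree btp size by blast
  from bchoice[OF this] obtain A where A: "\<forall>j\<in>{1..l}. A j \<subseteq> Q j \<and> card (A j) = k + 1 \<and>
      (\<forall>v\<in>Q j - A j. k \<le> card {a\<in>A j. E v a})" by blast
  define U' where "U' = (\<Union>j\<in>{1..l}. A j)"
  have "U' \<subseteq> V" unfolding U'_def cover using A by blast
  moreover have "card U' = (\<Sum>j\<in>{1..l}. card (A j))"
    unfolding U'_def
  proof (rule card_UN_disjoint)
    show "\<forall>j\<in>{1..l}. finite (A j)"
    proof
      fix j assume "j \<in> {1..l}"
      then have "card (A j) = k + 1" using A by blast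
      then show "finite (A j)" by (intro card_ge_0_finite) simp
    qed
    show "\<forall>i\<in>{1..l}. \<forall>j\<in>{1..l}. i \<noteq> j \<longrightarrow> A i \<inter> A j = {}" using A disj by blast
  qed simp
  then have "card U' = l * (k + 1)" using A by simp
  moreover have "\<exists>a\<in>U' - S. v = a \<or> v \<notin> U' \<and> E v a"
    if finS: "finite S" and S: "card S < k" and v: "v \<in> V - S" for S v
  proof (cases "v \<in> U'")
    case True
    then show ?thesis using v by blast
  next
    case False
    then obtain j where j: "j \<in> {1..l}" "v \<in> Q j - A j" using v unfolding cover U'_def by blast
    then have "k \<le> card {a\<in>A j. E v a}" using A by blast
    have "\<not> {a\<in>A j. E v a} \<subseteq> S"
    proof
      assume "{a\<in>A j. E v a} \<subseteq> S"
      then have "card {a\<in>A j. E v a} \<le> card S" by (rule card_mono[OF finS])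
      then show False using \<open>k \<le> card {a\<in>A j. E v a}\<close> S by linarith
    qed
    then obtain a where "a \<in> A j" "E v a" "a \<notin> S" by blast
    moreover have "a \<in> U'" using \<open>a \<in> A j\<close> j(1) unfolding U'_def by blast
    ultimately show ?thesis using False by blast
  qed
  ultimately show thesis by (rule that)
qed

lemma exists_absorbing_set:
  fixes k l :: nat and V :: "'a set" and E :: "'a \<Rightarrow> 'a \<Rightarrow> bool" and Q :: "nat \<Rightarrow> 'a set"
  assumes tour: "tournament V E"
    and cover: "V = (\<Union>j\<in>{1..l}. Q j)"
    and disj: "\<forall>i\<in>{1..l}. \<forall>j\<in>{1..l}. i \<noteq> j \<longrightarrow> Q i \<inter> Q j = {}"
    and size: "\<forall>j\<in>{1..l}. card (Q j) \<ge> k + 1"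
    and btp: "\<forall>j\<in>{1..l}. bt_path E (Q j)"
  obtains U U' where "U \<subseteq> U'" "U' \<subseteq> V" "card U \<le> 2 * k * (k + 1)" "card U' = l * (k + 1)"
    "\<And>S v. S \<subseteq> V \<Longrightarrow> card S + 1 \<le> k \<Longrightarrow> v \<in> V - S \<Longrightarrow>
       \<exists>xs. dpath E ((U' \<union> {v}) - S) xs \<and> hd xs = v \<and> last xs \<in> U"
proof -
  obtain U' where U'V: "U' \<subseteq> V" and cardU': "card U' = l * (k + 1)"
    and entry: "\<And>S v. finite S \<Longrightarrow> card S < k \<Longrightarrow> v \<in> V - S \<Longrightarrow> \<exists>a\<in>U' - S. v = a \<or> v \<notin> U' \<and> E v a"
    by (rule exists_one_step_absorbing_set[OF cover disj size btp], rule that)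
  have "finite (Q j)" if "j \<in> {1..l}" for j
    using bspec[OF size that] by (intro card_ge_0_finite) simp
  then have "finite V" unfolding cover by blast
  then have finU': "finite U'" using U'V finite_subset by blast
  obtain U where U: "U \<subseteq> U'" "card U = min (card U') (4 * k)"
    "\<forall>x\<in>U' - U. \<forall>u\<in>U. indegree E U' x \<le> indegree E U' u"
    using exists_subset_maximal_values[OF finU', where f = "indegree E U'" and d = "min (card U') (4 * k)"]
    by auto
  have "4 * k \<le> 2 * k * (k + 1)" by (cases k) auto
  then have cardU: "card U \<le> 2 * k * (k + 1)" using U(2) by linarith
  have paths: "\<exists>xs. dpath E ((U' \<union> {v}) - S) xs \<and> hd xs = v \<and> last xs \<in> U"
    if S: "S \<subseteq> V" "card S + 1 \<le> k" and v: "v \<in> V - S" for S v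
  proof -
    have finS: "finite S" using S \<open>finite V\<close> finite_subset by blast
    have large: "U = U' \<or> 4 * card S < card U"
    proof (cases "card U' \<le> 4 * k")
      case True
      then have "card U = card U'" using U(2) by simp
      then show ?thesis using card_subset_eq[OF finU' U(1)] by blast
    next
      case False
      then show ?thesis using U(2) S(2) by simp
    qed
    have "card S < k" using S(2) by simp
    from entry[OF finS this v] obtain a where a: "a \<in> U' - S" "v = a \<or> v \<notin> U' \<and> E v a" by blast
    from v have "v \<notin> S" by blast
    from dpath_to_maximal_indegree_set[OF tour finU' U'V U(1) U(3) large finS this a]
    show ?thesis .
  qed
  show thesis by (rule that[OF U(1) U'V cardU cardU' paths])
qed

theorem lemma2p7:
  fixes k l :: nat and V :: "'a set" and E :: "'a \<Rightarrow> 'a \<Rightarrow> bool" and Q :: "nat \<Rightarrow> 'a set"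
  assumes tour: "tournament V E"
    and cover: "V = (\<Union>j\<in>{1..l}. Q j)"
    and disj: "\<forall>i\<in>{1..l}. \<forall>j\<in>{1..l}. i \<noteq> j \<longrightarrow> Q i \<inter> Q j = {}"
    and size: "\<forall>j\<in>{1..l}. card (Q j) \<ge> k + 1"
    and btp: "\<forall>j\<in>{1..l}. bt_path E (Q j)"
  shows "\<exists>U W U' W'. U \<subseteq> U' \<and> U' \<subseteq> V \<and> W \<subseteq> W' \<and> W' \<subseteq> V \<and>
           card U \<le> 2 * k * (k + 1) \<and> card W \<le> 2 * k * (k + 1) \<and>
           card U' = l * (k + 1) \<and> card W' = l * (k + 1) \<and>
           (\<forall>S. S \<subseteq> V \<and> card S + 1 \<le> k \<longrightarrow>
              (\<forall>v \<in> V - S.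
                 (\<exists>xs. dpath E ((U' \<union> {v}) - S) xs \<and> hd xs = v \<and> last xs \<in> U) \<and>
                 (\<exists>xs. dpath E ((W' \<union> {v}) - S) xs \<and> hd xs \<in> W \<and> last xs = v)))"
proof -
  obtain U U' where U: "U \<subseteq> U'" "U' \<subseteq> V" "card U \<le> 2 * k * (k + 1)" "card U' = l * (k + 1)"
    and to_U: "\<And>S v. S \<subseteq> V \<Longrightarrow> card S + 1 \<le> k \<Longrightarrow> v \<in> V - S \<Longrightarrow>
      \<exists>xs. dpath E ((U' \<union> {v}) - S) xs \<and> hd xs = v \<and> last xs \<in> U"
    by (rule exists_absorbing_set[OF tour cover disj size btp], rule that)
  have btp': "\<forall>j\<in>{1..l}. bt_path (\<lambda>x y. E y x) (Q j)" using btp bt_path_converse by blast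
  obtain W W' where W: "W \<subseteq> W'" "W' \<subseteq> V" "card W \<le> 2 * k * (k + 1)" "card W' = l * (k + 1)"
    and to_W: "\<And>S v. S \<subseteq> V \<Longrightarrow> card S + 1 \<le> k \<Longrightarrow> v \<in> V - S \<Longrightarrow>
      \<exists>xs. dpath (\<lambda>x y. E y x) ((W' \<union> {v}) - S) xs \<and> hd xs = v \<and> last xs \<in> W"
    by (rule exists_absorbing_set[OF tournament_converse[OF tour] cover disj size btp'], rule that)
  have paths: "\<forall>S. S \<subseteq> V \<and> card S + 1 \<le> k \<longrightarrow>
      (\<forall>v \<in> V - S. (\<exists>xs. dpath E ((U' \<union> {v}) - S) xs \<and> hd xs = v \<and> last xs \<in> U) \<and>
                     (\<exists>xs. dpath E ((W' \<union> {v}) - S) xs \<and> hd xs \<in> W \<and> last xs = v))"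
  proof (intro allI impI ballI conjI)
    fix S v assume S: "S \<subseteq> V \<and> card S + 1 \<le> k" and v: "v \<in> V - S"
    then show "\<exists>xs. dpath E ((U' \<union> {v}) - S) xs \<and> hd xs = v \<and> last xs \<in> U" using to_U by blast
    from S v obtain xs where xs: "dpath (\<lambda>x y. E y x) ((W' \<union> {v}) - S) xs" "hd xs = v" "last xs \<in> W"
      using to_W by blast
    then have "xs \<noteq> []" unfolding dpath_def by blast
    with xs show "\<exists>xs. dpath E ((W' \<union> {v}) - S) xs \<and> hd xs \<in> W \<and> last xs = v"
      using dpath_rev_converse by (intro exI[of _ "rev xs"]) (auto simp: hd_rev last_rev)
  qed
  show ?thesis by (intro exI[of _ U] exI[of _ W] exI[of _ U'] exI[of _ W'] conjI; fact U W paths)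
qed

end
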